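(* In the instance constructed below, consider any feasible 2DKR packing (rotations allowed) that contains $2k$ rectangles. Then it does not contain both a horizontally oriented and a vertically oriented rectangle; i.e., either all packed rectangles are vertically oriented or all are horizontally oriented.
   Context: Let $k\ge 9$ be an odd integer and $\mathcal A$ a multiset of $n$ positive integers; let $M=\max_{a\in\mathcal A}a$ and $N=2Mk^4$, $K=[0,N]\times[0,N]$. For each element $a$ of $\mathcal A$ (counted with multiplicity) create two items (rectangles) $R_a$ with width $w(R_a)=N/k+a$ and height $h(R_a)=N/2-a$, and $R'_a$ with width $w(R'_a)=N/k-a$ and height $h(R'_a)=N/2+a$, each of profit $1$. A feasible 2DKR packing places a subset of the items as pairwise disjoint open axis-parallel rectangles inside $K$, each either unrotated or rotated by $90^\circ$. A packed rectangle $i$ is oriented vertically if it is placed unrotated (placed width $w(i)$, placed height $h(i)$, which here satisfies placed height $>$ placed width), and oriented horizontally otherwise. *)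

theory Defs
  imports Complex_Main
begin

text \<open>The multiset A of n positive integers is represented as a list as (with multiplicity,
  n = length as). An item is a pair (i, b) with i < n: b = False is R_a, b = True is R'_a,
  where a = as ! i.\<close>

type_synonym item = "nat \<times> bool"

definition bigN :: "nat \<Rightarrow> nat list \<Rightarrow> real" where
  "bigN k as = 2 * real (Max (set as)) * real k ^ 4"

definition items :: "nat list \<Rightarrow> item set" where
  "items as = {(i, b). i < length as}"

definition item_w :: "nat \<Rightarrow> nat list \<Rightarrow> item \<Rightarrow> real" where
  "item_w k as it = (if snd it then bigN k as / real k - real (as ! fst it)
                     else bigN k as / real k + real (as ! fst it))"

definition item_h :: "nat \<Rightarrow> nat list \<Rightarrow> item \<Rightarrow> real" where
  "item_h k as it = (if snd it then bigN k as / 2 + real (as ! fst it)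
                     else bigN k as / 2 - real (as ! fst it))"

definition placed_w :: "nat \<Rightarrow> nat list \<Rightarrow> (item \<Rightarrow> bool) \<Rightarrow> item \<Rightarrow> real" where
  "placed_w k as rot it = (if rot it then item_h k as it else item_w k as it)"

definition placed_h :: "nat \<Rightarrow> nat list \<Rightarrow> (item \<Rightarrow> bool) \<Rightarrow> item \<Rightarrow> real" where
  "placed_h k as rot it = (if rot it then item_w k as it else item_h k as it)"

definition open_rect ::
  "nat \<Rightarrow> nat list \<Rightarrow> (item \<Rightarrow> real) \<Rightarrow> (item \<Rightarrow> real) \<Rightarrow> (item \<Rightarrow> bool) \<Rightarrow> item \<Rightarrow> (real \<times> real) set" where
  "open_rect k as px py rot it =
     {(u, v). px it < u \<and> u < px it + placed_w k as rot it \<and>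
              py it < v \<and> v < py it + placed_h k as rot it}"

definition feasible_packing ::
  "nat \<Rightarrow> nat list \<Rightarrow> item set \<Rightarrow> (item \<Rightarrow> real) \<Rightarrow> (item \<Rightarrow> real) \<Rightarrow> (item \<Rightarrow> bool) \<Rightarrow> bool" where
  "feasible_packing k as S px py rot \<longleftrightarrow>
     S \<subseteq> items as \<and>
     (\<forall>it\<in>S. 0 \<le> px it \<and> px it + placed_w k as rot it \<le> bigN k as \<and>
              0 \<le> py it \<and> py it + placed_h k as rot it \<le> bigN k as) \<and>
     (\<forall>it\<in>S. \<forall>jt\<in>S. it \<noteq> jt \<longrightarrow> open_rect k as px py rot it \<inter> open_rect k as px py rot jt = {})"

definition vertical :: "(item \<Rightarrow> bool) \<Rightarrow> item \<Rightarrow> bool" where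
  "vertical rot it \<longleftrightarrow> \<not> rot it"

definition horizontal :: "(item \<Rightarrow> bool) \<Rightarrow> item \<Rightarrow> bool" where
  "horizontal rot it \<longleftrightarrow> rot it"

end

theory Submission
  imports Defs
begin

text \<open>Measured in units of M = max A, the square has side 2k^4 and every item has a long side
  within 1 of k^4 and a short side within 1 of 2k^3. Record each packed item by the columns and
  rows of the integer grid that meet its interior, and give an item weight k on a grid line parallel
  to its long side and weight 2 on one parallel to its short side. The items met by a line are
  disjoint along it, so every line has weight at most 2k; as k is odd, a line of weight exactly 2k
  meeting a horizontal item meets exactly two items, both horizontal. Double counting over the
  4k^4 grid lines shows that only O(k^2) lines have weight below 2k. A horizontal item crosses about
  2k^3 rows, so one of them is full and provides a second horizontal item; together the two cover
  all but 4 columns. A vertical item would then cross about 2k^3 columns each meeting one of the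
  two, and none of these columns can be full, which is too many.\<close>

lemma le_double_of_cube_bound:
  fixes k W :: nat
  assumes "2 \<le> k" and "k^3 * W \<le> 2 * k^4 + W"
  shows "W \<le> 2 * k"
proof (rule ccontr)
  assume "\<not> W \<le> 2 * k"
  then obtain d where W: "W = 2 * k + 1 + d" by (metis add.commute le_iff_add not_less_eq_eq plus_1_eq_Suc)
  have "2 * 2 * k \<le> k * k * k" using assms(1) by (intro mult_le_mono1 mult_le_mono) auto
  then have "2 * k + 1 < k^3" using assms(1) unfolding power3_eq_cube by linarith
  moreover have "d \<le> k^3 * d" using assms(1) by simp
  moreover have "k^3 * W = 2 * k^4 + k^3 + k^3 * d" unfolding W by (simp add: algebra_simps power_eq_if)
  ultimately show False using assms(2) W by linarith
qed

lemma odd_weight_split: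
  fixes k a b :: nat
  assumes "odd k" and "k * a + 2 * b = 2 * k" and "1 \<le> a"
  shows "a = 2 \<and> b = 0"
proof -
  have "k * a \<le> k * 2" using assms(2) by linarith
  then have "a \<le> 2" using odd_pos[OF assms(1)] by (metis mult_le_cancel1)
  then consider "a = 1" | "a = 2" using assms(3) by linarith
  then show ?thesis
  proof cases
    case 1
    then show ?thesis using assms(1,2) by presburger
  next
    case 2
    then show ?thesis using assms(2) by simp
  qed
qed

lemma quadratic_lt_cube:
  fixes k :: nat
  assumes "9 \<le> k"
  shows "4 * k^2 + 8 * k + 6 < 2 * k^3"
proof -
  have "9 * k \<le> k * k" and "k * k * 9 \<le> k * k * k"
    using assms by (intro mult_le_mono1 mult_le_mono2; simp)+
  then show ?thesis using assms unfolding power2_eq_square power3_eq_cube by linarith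
qed

lemma sum_if_const_eq_card:
  "finite T \<Longrightarrow> (\<Sum>i\<in>T. if P i then a else b) = a * card {i\<in>T. P i} + b * card {i\<in>T. \<not> P i}"
  by (simp add: sum.If_cases Int_def conj_commute mult.commute)

lemma disjoint_family_weight_le:
  fixes Z :: "'a \<Rightarrow> nat set" and w :: "'a \<Rightarrow> nat"
  assumes "finite T" and "2 \<le> k"
    and Z_subset: "\<And>i. i \<in> T \<Longrightarrow> Z i \<subseteq> {..<2 * k^4}"
    and Z_disjoint: "\<And>i j. i \<in> T \<Longrightarrow> j \<in> T \<Longrightarrow> i \<noteq> j \<Longrightarrow> Z i \<inter> Z j = {}"
    and w_ge_2: "\<And>i. i \<in> T \<Longrightarrow> 2 \<le> w i"
    and card_Z_ge: "\<And>i. i \<in> T \<Longrightarrow> k^3 * w i \<le> card (Z i) + 2"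
  shows "(\<Sum>i\<in>T. w i) \<le> 2 * k"
proof (rule le_double_of_cube_bound[OF \<open>2 \<le> k\<close>])
  have "(\<Sum>i\<in>T. card (Z i)) = card (\<Union>i\<in>T. Z i)"
    using assms(1) Z_subset Z_disjoint by (intro card_UN_disjoint[symmetric]) (auto intro: finite_subset)
  also have "\<dots> \<le> card {..<2 * k^4}"
    using Z_subset by (intro card_mono) auto
  finally have card_union: "(\<Sum>i\<in>T. card (Z i)) \<le> 2 * k^4" by simp
  have "2 * card T \<le> (\<Sum>i\<in>T. w i)"
    using sum_mono[OF w_ge_2] by (simp add: mult.commute)
  have "k^3 * (\<Sum>i\<in>T. w i) = (\<Sum>i\<in>T. k^3 * w i)"
    by (rule sum_distrib_left)
  also have "\<dots> \<le> (\<Sum>i\<in>T. card (Z i) + 2)"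
    using card_Z_ge by (rule sum_mono)
  also have "\<dots> = (\<Sum>i\<in>T. card (Z i)) + 2 * card T"
    unfolding sum.distrib by simp
  finally show "k^3 * (\<Sum>i\<in>T. w i) \<le> 2 * k^4 + (\<Sum>i\<in>T. w i)"
    using card_union \<open>2 * card T \<le> (\<Sum>i\<in>T. w i)\<close> by linarith
qed

text \<open>The weights are the lengths k^4 and 2k^3 of the long and short sides divided by k^3;
  along i means that the long side of item i is parallel to the line.\<close>

definition line_weight :: "nat \<Rightarrow> 'a set \<Rightarrow> ('a \<Rightarrow> nat set) \<Rightarrow> ('a \<Rightarrow> bool) \<Rightarrow> nat \<Rightarrow> nat" where
  "line_weight k S Z along r = (\<Sum>i\<in>{i\<in>S. r \<in> Z i}. if along i then k else 2)"

text \<open>X i and Y i are the columns and rows of the grid {..<2k^4}^2 met by the interior of item i,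
  and horiz i says that its long side is horizontal.\<close>

locale grid_packing =
  fixes k :: nat and S :: "'a set" and X Y :: "'a \<Rightarrow> nat set" and horiz :: "'a \<Rightarrow> bool"
  assumes odd_k: "odd k" and k_ge_9: "9 \<le> k" and finite_S: "finite S"
    and X_subset: "i \<in> S \<Longrightarrow> X i \<subseteq> {..<2 * k^4}"
    and Y_subset: "i \<in> S \<Longrightarrow> Y i \<subseteq> {..<2 * k^4}"
    and disjoint: "i \<in> S \<Longrightarrow> j \<in> S \<Longrightarrow> i \<noteq> j \<Longrightarrow> X i \<inter> X j = {} \<or> Y i \<inter> Y j = {}"
    and long_side: "i \<in> S \<Longrightarrow> k^4 \<le> card (if horiz i then X i else Y i) + 2"
    and short_side: "i \<in> S \<Longrightarrow> 2 * k^3 \<le> card (if horiz i then Y i else X i) + 2"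
begin

lemma transpose: "grid_packing k S Y X (\<lambda>i. \<not> horiz i)"
proof
  fix i j assume "i \<in> S" "j \<in> S" "i \<noteq> j"
  then show "Y i \<inter> Y j = {} \<or> X i \<inter> X j = {}" using disjoint by blast
next
  fix i assume i: "i \<in> S"
  show "k^4 \<le> card (if \<not> horiz i then Y i else X i) + 2"
    using long_side[OF i] by (cases "horiz i") simp_all
  show "2 * k^3 \<le> card (if \<not> horiz i then X i else Y i) + 2"
    using short_side[OF i] by (cases "horiz i") simp_all
qed (use odd_k k_ge_9 finite_S X_subset Y_subset in auto)

lemma row_weight_le: "line_weight k S Y horiz r \<le> 2 * k"
  unfolding line_weight_def
proof (rule disjoint_family_weight_le)
  fix i assume i: "i \<in> {i \<in> S. r \<in> Y i}"
  then show "X i \<subseteq> {..<2 * k^4}" using X_subset by simp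
  show "2 \<le> (if horiz i then k else 2)" using k_ge_9 by simp
  have "k^3 * k = k^4" by (simp add: power_eq_if)
  then show "k^3 * (if horiz i then k else 2) \<le> card (X i) + 2"
    using long_side[of i] short_side[of i] i by (auto simp: mult.commute)
next
  fix i j assume "i \<in> {i \<in> S. r \<in> Y i}" "j \<in> {i \<in> S. r \<in> Y i}" "i \<noteq> j"
  then show "X i \<inter> X j = {}" using disjoint by blast
qed (use finite_S k_ge_9 in auto)

lemma full_row_counts:
  assumes "line_weight k S Y horiz r = 2 * k" and "i \<in> S" "r \<in> Y i" "horiz i"
  shows "card {j \<in> S. r \<in> Y j \<and> horiz j} = 2" and "{j \<in> S. r \<in> Y j \<and> \<not> horiz j} = {}"
proof -
  let ?T = "{j \<in> S. r \<in> Y j}"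
  have fin: "finite ?T" using finite_S by simp
  have fin_H: "finite {j \<in> S. r \<in> Y j \<and> horiz j}" and fin_V: "finite {j \<in> S. r \<in> Y j \<and> \<not> horiz j}"
    by (auto intro: finite_subset[OF _ finite_S])
  have "k * card {j \<in> ?T. horiz j} + 2 * card {j \<in> ?T. \<not> horiz j} = 2 * k"
    using assms(1) unfolding line_weight_def sum_if_const_eq_card[OF fin] .
  moreover have "1 \<le> card {j \<in> S. r \<in> Y j \<and> horiz j}"
    using assms(2-4) fin_H by (auto simp: Suc_le_eq card_gt_0_iff)
  ultimately have "card {j \<in> S. r \<in> Y j \<and> horiz j} = 2 \<and> card {j \<in> S. r \<in> Y j \<and> \<not> horiz j} = 0"
    using odd_weight_split[OF odd_k] by (simp add: conj_assoc)
  then show "card {j \<in> S. r \<in> Y j \<and> horiz j} = 2" and "{j \<in> S. r \<in> Y j \<and> \<not> horiz j} = {}"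
    using fin_V by simp_all
qed

lemma row_weight_sum:
  "(\<Sum>r<2 * k^4. line_weight k S Y horiz r) = (\<Sum>i\<in>S. (if horiz i then k else 2) * card (Y i))"
proof -
  have "(\<Sum>r<2 * k^4. line_weight k S Y horiz r)
      = (\<Sum>i\<in>S. \<Sum>r\<in>{r \<in> {..<2 * k^4}. r \<in> Y i}. if horiz i then k else 2)"
    unfolding line_weight_def using finite_S by (simp add: sum.swap_restrict)
  also have "\<dots> = (\<Sum>i\<in>S. (if horiz i then k else 2) * card (Y i))"
  proof (rule sum.cong[OF refl])
    fix i assume "i \<in> S"
    then have "{r \<in> {..<2 * k^4}. r \<in> Y i} = Y i" using Y_subset by blast
    then show "(\<Sum>r\<in>{r \<in> {..<2 * k^4}. r \<in> Y i}. if horiz i then k else 2)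
             = (if horiz i then k else 2) * card (Y i)" by simp
  qed
  finally show ?thesis .
qed

lemma row_deficiency:
  "(\<Sum>r<2 * k^4. line_weight k S Y horiz r) + card {r \<in> {..<2 * k^4}. line_weight k S Y horiz r < 2 * k}
     \<le> 2 * k * (2 * k^4)"
proof -
  have "(\<Sum>r<2 * k^4. line_weight k S Y horiz r + (if line_weight k S Y horiz r < 2 * k then 1 else 0))
      \<le> (\<Sum>r<2 * k^4. 2 * k)"
    using row_weight_le by (intro sum_mono) (simp add: Suc_le_eq)
  then show ?thesis by (simp add: sum.distrib sum.If_cases Int_def algebra_simps)
qed

lemma item_weight_ge:
  assumes "i \<in> S"
  shows "4 * k^4 \<le> (if horiz i then k else 2) * card (Y i) + (if \<not> horiz i then k else 2) * card (X i) + (2 * k + 4)"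
proof -
  have k4: "k * (2 * k^3) = 2 * k^4" by (simp add: power_eq_if)
  show ?thesis
  proof (cases "horiz i")
    case True
    have "k * (2 * k^3) \<le> k * (card (Y i) + 2)"
      using short_side[OF assms] True by (intro mult_le_mono2) simp
    moreover have "k^4 \<le> card (X i) + 2" using long_side[OF assms] True by simp
    ultimately show ?thesis using True k4 by (simp add: algebra_simps)
  next
    case False
    have "k * (2 * k^3) \<le> k * (card (X i) + 2)"
      using short_side[OF assms] False by (intro mult_le_mono2) simp
    moreover have "k^4 \<le> card (Y i) + 2" using long_side[OF assms] False by simp
    ultimately show ?thesis using False k4 by (simp add: algebra_simps)
  qed
qed

lemma deficient_lines_card:
  assumes "card S = 2 * k"
  shows "card {r \<in> {..<2 * k^4}. line_weight k S Y horiz r < 2 * k}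
       + card {c \<in> {..<2 * k^4}. line_weight k S X (\<lambda>i. \<not> horiz i) c < 2 * k} \<le> 4 * k^2 + 8 * k"
proof -
  interpret transposed: grid_packing k S Y X "\<lambda>i. \<not> horiz i" by (rule transpose)
  let ?w = "\<lambda>i. (if horiz i then k else 2) * card (Y i) + (if \<not> horiz i then k else 2) * card (X i)"
  have "card S * (4 * k^4) \<le> (\<Sum>i\<in>S. ?w i + (2 * k + 4))"
    using item_weight_ge sum_mono[of S "\<lambda>_. 4 * k^4"] by (simp add: mult.commute)
  also have "\<dots> = (\<Sum>r<2 * k^4. line_weight k S Y horiz r)
                 + (\<Sum>c<2 * k^4. line_weight k S X (\<lambda>i. \<not> horiz i) c) + card S * (2 * k + 4)"
    using row_weight_sum transposed.row_weight_sum by (simp add: sum.distrib)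
  finally show ?thesis
    using row_deficiency transposed.row_deficiency assms
    by (simp add: algebra_simps power_eq_if)
qed

lemma horizontal_partner:
  assumes "card S = 2 * k" and "H \<in> S" "horiz H"
  obtains B where "B \<in> S" "B \<noteq> H" "horiz B" "X H \<inter> X B = {}"
proof -
  let ?D = "{r \<in> {..<2 * k^4}. line_weight k S Y horiz r < 2 * k}"
  have "card ?D + 2 < card (Y H)"
    using deficient_lines_card[OF assms(1)] short_side[OF assms(2)] assms(3) quadratic_lt_cube[OF k_ge_9]
    by simp
  then have "\<not> Y H \<subseteq> ?D" using card_mono[of ?D "Y H"] by fastforce
  then obtain r where r: "r \<in> Y H" "r \<notin> ?D" by blast
  then have "line_weight k S Y horiz r = 2 * k"
    using row_weight_le[of r] Y_subset[OF assms(2)] by fastforce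
  then have "card {j \<in> S. r \<in> Y j \<and> horiz j} = 2"
    using full_row_counts(1) assms(2,3) r(1) by blast
  then obtain B where "B \<in> S" "r \<in> Y B" "horiz B" "B \<noteq> H"
    by (metis (no_types, lifting) card_2_iff' mem_Collect_eq)
  moreover have "X H \<inter> X B = {}" using disjoint[OF assms(2) \<open>B \<in> S\<close>] r(1) calculation by blast
  ultimately show thesis using that by blast
qed

lemma card_uncovered_columns_le:
  assumes "H \<in> S" "horiz H" and "B \<in> S" "horiz B" and "X H \<inter> X B = {}"
  shows "card ({..<2 * k^4} - (X H \<union> X B)) \<le> 4"
proof -
  have sub: "X H \<union> X B \<subseteq> {..<2 * k^4}" using X_subset assms(1,3) by blast
  then have "finite (X H \<union> X B)" by (rule finite_subset) simp
  then have "card ({..<2 * k^4} - (X H \<union> X B)) = 2 * k^4 - (card (X H) + card (X B))"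
    using sub assms(5) by (simp add: card_Diff_subset card_Un_disjoint)
  moreover have "k^4 \<le> card (X H) + 2" "k^4 \<le> card (X B) + 2"
    using long_side assms(1-4) by fastforce+
  ultimately show ?thesis by linarith
qed

theorem uniform_orientation:
  assumes "card S = 2 * k"
  shows "(\<forall>i\<in>S. \<not> horiz i) \<or> (\<forall>i\<in>S. horiz i)"
proof (rule ccontr)
  assume "\<not> ?thesis"
  then obtain V H where V: "V \<in> S" "\<not> horiz V" and H: "H \<in> S" "horiz H" by blast
  obtain B where B: "B \<in> S" "B \<noteq> H" "horiz B" "X H \<inter> X B = {}"
    using horizontal_partner[OF assms H] .
  interpret transposed: grid_packing k S Y X "\<lambda>i. \<not> horiz i" by (rule transpose)
  let ?L = "{..<2 * k^4}"
  let ?D = "{c \<in> ?L. line_weight k S X (\<lambda>i. \<not> horiz i) c < 2 * k}"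
  have deficient: "X V \<inter> (X H \<union> X B) \<subseteq> ?D"
  proof
    fix c assume c: "c \<in> X V \<inter> (X H \<union> X B)"
    have "line_weight k S X (\<lambda>i. \<not> horiz i) c \<noteq> 2 * k"
    proof
      assume "line_weight k S X (\<lambda>i. \<not> horiz i) c = 2 * k"
      then have "{j \<in> S. c \<in> X j \<and> horiz j} = {}"
        using transposed.full_row_counts(2)[of c V] V c by simp
      then show False using c H B by blast
    qed
    then show "c \<in> ?D" using transposed.row_weight_le[of c] X_subset[OF V(1)] c by fastforce
  qed
  have "card (?L - (X H \<union> X B)) \<le> 4"
    using card_uncovered_columns_le H B by blast
  moreover have "card (X V) \<le> card ?D + card (?L - (X H \<union> X B))"
  proof -
    have "X V \<subseteq> ?D \<union> (?L - (X H \<union> X B))" using X_subset[OF V(1)] deficient by blast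
    then have "card (X V) \<le> card (?D \<union> (?L - (X H \<union> X B)))" by (rule card_mono[rotated]) simp
    also have "\<dots> \<le> card ?D + card (?L - (X H \<union> X B))" by (rule card_Un_le)
    finally show ?thesis .
  qed
  moreover have "2 * k^3 \<le> card (X V) + 2" using short_side[OF V(1)] V(2) by simp
  ultimately show False
    using deficient_lines_card[OF assms] quadratic_lt_cube[OF k_ge_9] by linarith
qed

end

definition grid_span :: "nat \<Rightarrow> real \<Rightarrow> real \<Rightarrow> nat set" where
  "grid_span L x d = {j \<in> {..<L}. x < real j \<and> real j < x + d}"

lemma card_grid_span_ge:
  assumes "0 \<le> x" and "x + d \<le> real L"
  shows "d - 1 \<le> real (card (grid_span L x d))"
proof -
  define a where "a = nat \<lfloor>x\<rfloor> + 1"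
  define b where "b = nat \<lceil>x + d\<rceil>"
  have a: "x < real a" "real a \<le> x + 1"
    using assms(1) unfolding a_def by (simp_all add: of_nat_nat) linarith+
  have b: "x + d \<le> real b" "b \<le> L"
    using assms unfolding b_def by (auto simp: nat_le_iff ceiling_le_iff) linarith
  have "{a..<b} \<subseteq> grid_span L x d"
  proof
    fix j assume j: "j \<in> {a..<b}"
    then have "int j < \<lceil>x + d\<rceil>" unfolding b_def by (simp add: zless_nat_eq_int_zless)
    then show "j \<in> grid_span L x d"
      using j a b(2) unfolding grid_span_def by (auto simp: less_ceiling_iff)
  qed
  then have "card {a..<b} \<le> card (grid_span L x d)"
    by (rule card_mono[rotated]) (simp add: grid_span_def)
  then show ?thesis using a b by simp
qed

lemma item_sides_ge:
  assumes "it \<in> items as" and "\<forall>a\<in>set as. 0 < a" and "0 < k"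
  defines "M \<equiv> real (Max (set as))"
  shows "2 * real k^3 - 1 \<le> item_w k as it / M" and "real k^4 - 1 \<le> item_h k as it / M"
proof -
  have "as ! fst it \<in> set as" using assms(1) by (auto simp: items_def)
  then have a_le: "real (as ! fst it) \<le> M" and "0 < M"
    using assms(2) unfolding M_def by (auto intro: order.strict_trans2)
  have "bigN k as / real k = M * (2 * real k^3)" and "bigN k as / 2 = M * real k^4"
    using assms(3) unfolding bigN_def M_def by (simp_all add: power_eq_if)
  then have "M * (2 * real k^3 - 1) \<le> item_w k as it" and "M * (real k^4 - 1) \<le> item_h k as it"
    using a_le unfolding item_w_def item_h_def by (simp_all add: algebra_simps)
  then show "2 * real k^3 - 1 \<le> item_w k as it / M" and "real k^4 - 1 \<le> item_h k as it / M"
    using \<open>0 < M\<close> by (simp_all add: pos_le_divide_eq mult.commute)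
qed

lemma feasible_packing_grid_packing:
  assumes "odd k" and "9 \<le> k" and "\<forall>a\<in>set as. 0 < a" and "finite S"
    and "feasible_packing k as S px py rot"
  defines "M \<equiv> real (Max (set as))"
  shows "grid_packing k S (\<lambda>it. grid_span (2 * k^4) (px it / M) (placed_w k as rot it / M))
                          (\<lambda>it. grid_span (2 * k^4) (py it / M) (placed_h k as rot it / M)) rot"
    (is "grid_packing k S ?X ?Y rot")
proof -
  have S_items: "S \<subseteq> items as"
    and in_box: "\<And>it. it \<in> S \<Longrightarrow> 0 \<le> px it \<and> px it + placed_w k as rot it \<le> bigN k as \<and>
                                   0 \<le> py it \<and> py it + placed_h k as rot it \<le> bigN k as"
    and disj: "\<And>it jt. it \<in> S \<Longrightarrow> jt \<in> S \<Longrightarrow> it \<noteq> jt \<Longrightarrow>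
                 open_rect k as px py rot it \<inter> open_rect k as px py rot jt = {}"
    using assms(5) unfolding feasible_packing_def by auto
  have M_pos: "0 < M" if "it \<in> S" for it
  proof -
    have "as ! fst it \<in> set as" using that S_items by (auto simp: items_def)
    then show ?thesis using assms(3) unfolding M_def by (auto intro: order.strict_trans2)
  qed
  have card_X: "placed_w k as rot it / M - 1 \<le> real (card (?X it))"
   and card_Y: "placed_h k as rot it / M - 1 \<le> real (card (?Y it))" if "it \<in> S" for it
  proof -
    have "bigN k as / M = real (2 * k^4)" using M_pos[OF that] unfolding bigN_def M_def by simp
    moreover have "(px it + placed_w k as rot it) / M \<le> bigN k as / M"
      and "(py it + placed_h k as rot it) / M \<le> bigN k as / M"
      using in_box[OF that] M_pos[OF that] by (simp_all add: divide_right_mono)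
    ultimately show "placed_w k as rot it / M - 1 \<le> real (card (?X it))"
      and "placed_h k as rot it / M - 1 \<le> real (card (?Y it))"
      using in_box[OF that] M_pos[OF that]
      by (auto intro!: card_grid_span_ge simp: add_divide_distrib[symmetric])
  qed
  show ?thesis
  proof
    fix it assume it: "it \<in> S"
    have "2 * real k^3 - 1 \<le> item_w k as it / M" and "real k^4 - 1 \<le> item_h k as it / M"
      using item_sides_ge[of it as k] S_items it assms(2,3) unfolding M_def by auto
    then have "real (k^4) \<le> real (card (if rot it then ?X it else ?Y it) + 2)"
      and "real (2 * k^3) \<le> real (card (if rot it then ?Y it else ?X it) + 2)"
      using card_X[OF it] card_Y[OF it] by (auto simp: placed_w_def placed_h_def)
    then show "k^4 \<le> card (if rot it then ?X it else ?Y it) + 2"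
      and "2 * k^3 \<le> card (if rot it then ?Y it else ?X it) + 2"
      by (simp_all only: of_nat_le_iff)
  next
    fix it jt assume "it \<in> S" "jt \<in> S" "it \<noteq> jt"
    show "?X it \<inter> ?X jt = {} \<or> ?Y it \<inter> ?Y jt = {}"
    proof (rule ccontr)
      assume "\<not> ?thesis"
      then obtain c r where "c \<in> ?X it \<inter> ?X jt" "r \<in> ?Y it \<inter> ?Y jt" by blast
      then have "(real c * M, real r * M) \<in> open_rect k as px py rot it \<inter> open_rect k as px py rot jt"
        using M_pos[OF \<open>it \<in> S\<close>]
        by (simp add: grid_span_def open_rect_def divide_less_eq less_divide_eq add_divide_distrib[symmetric])
      then show False using disj[OF \<open>it \<in> S\<close> \<open>jt \<in> S\<close> \<open>it \<noteq> jt\<close>] by blast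
    qed
  qed (use assms(1,2,4) in \<open>auto simp: grid_span_def\<close>)
qed

theorem mainTheorem11:
  fixes k :: nat and as :: "nat list"
    and S :: "item set" and px py :: "item \<Rightarrow> real" and rot :: "item \<Rightarrow> bool"
  assumes "odd k" and "k \<ge> 9"
    and "\<forall>a\<in>set as. a > 0"
    and "feasible_packing k as S px py rot"
    and "card S = 2 * k"
  shows "(\<forall>it\<in>S. vertical rot it) \<or> (\<forall>it\<in>S. horizontal rot it)"
proof -
  have "finite S" using assms(2,5) by (intro card_ge_0_finite) simp
  with assms show ?thesis
    using grid_packing.uniform_orientation[OF feasible_packing_grid_packing]
    unfolding vertical_def horizontal_def by blast
qed

end
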